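(* Let $n\ge 4$ and let $B$ be an $n\times n$ nilpotent matrix over $\mathbb{F}$ with $B^2\neq 0$. Then $\mathcal{P}(\mathcal{N}_B)\subsetneq \mathcal{P}(n)$, i.e. there exists a partition $\underline{\mu}$ of $n$ such that no nilpotent matrix of shape $\underline{\mu}$ commutes with $B$.
   Context: $\mathbb{F}$ is an algebraically closed field of characteristic $0$. A partition of $n$ is a nonincreasing sequence of positive integers summing to $n$; $\mathcal{P}(n)$ denotes the set of all partitions of $n$. For a nilpotent matrix $A$, its shape $\mathrm{sh}(A)$ is the partition of $n$ given by the sizes of the Jordan blocks of its Jordan canonical form. For a nilpotent $n\times n$ matrix $B$, $\mathcal{N}_B$ is the set of all nilpotent $n\times n$ matrices $A$ with $AB=BA$, and $\mathcal{P}(\mathcal{N}_B)=\{\mathrm{sh}(A): A\in\mathcal{N}_B\}$. *)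

theory Defs
  imports "Jordan_Normal_Form.Jordan_Normal_Form"
begin

definition alg_closed_type :: "'a :: field itself \<Rightarrow> bool" where
  "alg_closed_type _ \<longleftrightarrow> (\<forall>p :: 'a poly. degree p \<ge> 1 \<longrightarrow> (\<exists>x. poly p x = 0))"

definition is_partition :: "nat \<Rightarrow> nat list \<Rightarrow> bool" where
  "is_partition n mu \<longleftrightarrow> sorted_wrt (\<ge>) mu \<and> (\<forall>x\<in>set mu. 0 < x) \<and> sum_list mu = n"

definition nilpotent_mat :: "'a :: semiring_1 mat \<Rightarrow> bool" where
  "nilpotent_mat A \<longleftrightarrow> (\<exists>k. A ^\<^sub>m k = 0\<^sub>m (dim_row A) (dim_col A))"

definition has_shape :: "'a :: semiring_1 mat \<Rightarrow> nat list \<Rightarrow> bool" where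
  "has_shape A mu \<longleftrightarrow> (\<exists>n_as. jordan_nf A n_as \<and> mu = rev (sort (map fst n_as)))"

definition nil_commutator :: "nat \<Rightarrow> 'a :: semiring_1 mat \<Rightarrow> 'a mat set" where
  "nil_commutator n B = {A. A \<in> carrier_mat n n \<and> nilpotent_mat A \<and> A * B = B * A}"

end

theory Submission
  imports Defs "Jordan_Normal_Form.Jordan_Normal_Form_Uniqueness"
begin

text \<open>
  Let B be a nilpotent n x n matrix with n \<ge> 4 and B^2 \<noteq> 0. We show that one of the two
  partitions [n] and [n-1, 1] is not the shape of any nilpotent matrix commuting with B.

  Everything is reduced to comparing the kernel dimensions k1 = dim ker B and k2 = dim ker B^2.
  If a nilpotent A of shape [n] commutes with B, then in the Jordan basis of A the matrix B
  becomes an upper triangular Toeplitz matrix, i.e. a polynomial in the shift; if its first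
  nonzero coefficient sits at index k, then k1 = k, k2 = 2k and 2k < n because B^2 \<noteq> 0.
  If a nilpotent X of shape [n-1, 1] commutes with B, then in the Jordan basis of X the matrix B
  is a Toeplitz block of size n-1 bordered by one entry in the first row and one in the last
  row (a "hook" matrix); an analysis of its first nonzero Toeplitz coefficient m shows that
  either k2 = 2m+1 is odd or 2 k1 \<ge> n, both incompatible with the first situation.
\<close>


lemma nilpotent_eigenvector_zero:
  fixes A :: "'a :: field mat"
  assumes A: "A \<in> carrier_mat n n" and nil: "nilpotent_mat A" and ev: "eigenvector A v c"
  shows "c = 0"
proof -
  from nil A obtain K where K: "A ^\<^sub>m K = 0\<^sub>m n n" unfolding nilpotent_mat_def by auto
  from ev A have v: "v \<in> carrier_vec n" and "v \<noteq> 0\<^sub>v n" unfolding eigenvector_def by auto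
  then obtain i where i: "i < n" and vi: "v $ i \<noteq> 0" by (metis eq_vecI carrier_vecD index_zero_vec)
  have "0\<^sub>m n n *\<^sub>v v = 0\<^sub>v n" using v by (intro eq_vecI) auto
  hence "(c ^ K) \<cdot>\<^sub>v v = 0\<^sub>v n"
    using eigenvector_pow[OF A ev, of K] K by simp
  from arg_cong[OF this, of "\<lambda>w. w $ i"] i vi v have "c ^ K = 0" by simp
  thus "c = 0" by simp
qed

text \<open>Hence every Jordan block of a nilpotent matrix has eigenvalue 0: a block (m, a) with
  m > 0 makes a a root of the characteristic polynomial.\<close>
lemma nilpotent_jordan_nf_eigenvalues:
  fixes A :: "'a :: field mat"
  assumes A: "A \<in> carrier_mat n n" and nil: "nilpotent_mat A" and jnf: "jordan_nf A n_as"
    and block: "(m, a) \<in> set n_as"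
  shows "a = 0"
proof -
  from jnf block have "m \<noteq> 0" unfolding jordan_nf_def by force
  hence "poly ([:- a, 1:] ^ m) a = 0" by simp
  with block have "poly (char_poly A) a = 0"
    unfolding jordan_nf_char_poly[OF jnf] poly_prod_list prod_list_zero_iff by force
  hence "eigenvalue A a" using eigenvalue_root_char_poly[OF A] by simp
  then obtain v where "eigenvector A v a" unfolding eigenvalue_def by blast
  from nilpotent_eigenvector_zero[OF A nil this] show ?thesis .
qed

lemma nilpotent_similar_wit:
  assumes wit: "similar_mat_wit B B' P Q" and B: "B \<in> carrier_mat n n" and nil: "nilpotent_mat B"
  shows "nilpotent_mat B'"
proof -
  note w = similar_mat_witD2[OF B wit]
  from nil B obtain K where K: "B ^\<^sub>m K = 0\<^sub>m n n" unfolding nilpotent_mat_def by auto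
  have "B' ^\<^sub>m K = Q * B ^\<^sub>m K * P"
    using similar_mat_wit_pow[OF similar_mat_wit_sym[OF wit], of K]
    unfolding similar_mat_wit_def Let_def by auto
  with K w have "B' ^\<^sub>m K = 0\<^sub>m n n" by simp
  with w show ?thesis unfolding nilpotent_mat_def by auto
qed

lemma mult_unit_vec:
  fixes M :: "'a :: semiring_1 mat"
  assumes M: "M \<in> carrier_mat nr n" and j: "j < n"
  shows "M *\<^sub>v unit_vec n j = col M j"
proof (rule eq_vecI)
  fix i assume "i < dim_vec (col M j)"
  with M j show "(M *\<^sub>v unit_vec n j) $ i = col M j $ i" by auto
qed (use M in auto)

text \<open>A column of a nilpotent matrix that is a multiple of the corresponding unit vector
  is zero, since that unit vector would otherwise be an eigenvector with nonzero eigenvalue.\<close>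
lemma nilpotent_diag_zero:
  fixes M :: "'a :: field mat"
  assumes M: "M \<in> carrier_mat n n" and nil: "nilpotent_mat M" and j: "j < n"
    and col: "\<And>i. i < n \<Longrightarrow> i \<noteq> j \<Longrightarrow> M $$ (i, j) = 0"
  shows "M $$ (j, j) = 0"
proof (rule nilpotent_eigenvector_zero[OF M nil])
  have "M *\<^sub>v unit_vec n j = M $$ (j, j) \<cdot>\<^sub>v unit_vec n j"
    unfolding mult_unit_vec[OF M j] using M j col by (intro eq_vecI) auto
  thus "eigenvector M (unit_vec n j) (M $$ (j, j))"
    using M j unfolding eigenvector_def by auto
qed

text \<open>Two-column version: if column p of a nilpotent matrix M vanishes and column q lives
  in the span of the unit vectors e_p and e_q, then the entry M(q,q) is 0; otherwise column q
  would be an eigenvector of M for the eigenvalue M(q,q).\<close>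
lemma nilpotent_col_pair_diag_zero:
  fixes M :: "'a :: field mat"
  assumes M: "M \<in> carrier_mat n n" and nil: "nilpotent_mat M"
    and p: "p < n" and q: "q < n" "q \<noteq> p"
    and colp: "\<And>i. i < n \<Longrightarrow> M $$ (i, p) = 0"
    and colq: "\<And>i. i < n \<Longrightarrow> i \<noteq> p \<Longrightarrow> i \<noteq> q \<Longrightarrow> M $$ (i, q) = 0"
  shows "M $$ (q, q) = 0"
proof (rule ccontr)
  let ?g = "M $$ (q, q)" and ?v = "col M q"
  assume g: "?g \<noteq> 0"
  have v: "?v = M $$ (p, q) \<cdot>\<^sub>v unit_vec n p + ?g \<cdot>\<^sub>v unit_vec n q"
    using M p q colq by (intro eq_vecI) auto
  have Mp: "M *\<^sub>v unit_vec n p = 0\<^sub>v n"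
    unfolding mult_unit_vec[OF M p] using M p colp by (intro eq_vecI) auto
  have "M *\<^sub>v ?v = M $$ (p, q) \<cdot>\<^sub>v (M *\<^sub>v unit_vec n p) + ?g \<cdot>\<^sub>v (M *\<^sub>v unit_vec n q)"
    unfolding v using M by (simp add: mult_add_distrib_mat_vec[OF M] mult_mat_vec[OF M])
  also have "\<dots> = ?g \<cdot>\<^sub>v ?v" unfolding Mp mult_unit_vec[OF M q(1)] using M by auto
  finally have Mv: "M *\<^sub>v ?v = ?g \<cdot>\<^sub>v ?v" .
  have "?v $ q \<noteq> 0" using M q g by simp
  hence "?v \<noteq> 0\<^sub>v n" using q by auto
  with Mv M have "eigenvector M ?v ?g" unfolding eigenvector_def by auto
  from nilpotent_eigenvector_zero[OF M nil this] g show False by simp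
qed

lemma nilpotent_shape_jordan_nf:
  fixes A :: "'a :: field mat"
  assumes A: "A \<in> carrier_mat n n" and nil: "nilpotent_mat A" and sh: "has_shape A mu"
  obtains ms where "jordan_nf A (map (\<lambda>m. (m, 0)) ms)" "mset ms = mset mu"
proof -
  from sh obtain n_as where jnf: "jordan_nf A n_as" and mu: "mu = rev (sort (map fst n_as))"
    unfolding has_shape_def by auto
  have "map (\<lambda>m. (m, 0)) (map fst n_as) = n_as"
    using nilpotent_jordan_nf_eigenvalues[OF A nil jnf] by (induction n_as) auto
  with jnf mu show ?thesis by (intro that[of "map fst n_as"]) auto
qed

lemma jordan_matrix_single: "jordan_matrix [(n, a)] = jordan_block n a"
  unfolding jordan_matrix_def by (simp only: list.map case_prod_conv diag_block_mat_singleton)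

lemma jordan_matrix_two: "jordan_matrix [(p, a), (q, b)] =
  four_block_mat (jordan_block p a) (0\<^sub>m p q) (0\<^sub>m q p) (jordan_block q b)"
  unfolding jordan_matrix_Cons[of p a "[(q, b)]"] jordan_matrix_single by simp

lemma block_swap_similar:
  fixes A D :: "'a :: comm_ring_1 mat"
  assumes A: "A \<in> carrier_mat a a" and D: "D \<in> carrier_mat d d"
  shows "similar_mat (four_block_mat D (0\<^sub>m d a) (0\<^sub>m a d) A)
    (four_block_mat A (0\<^sub>m a d) (0\<^sub>m d a) D)"
proof -
  define P where "P = four_block_mat (0\<^sub>m d a) (1\<^sub>m d) (1\<^sub>m a) (0\<^sub>m a d :: 'a mat)"
  define Q where "Q = four_block_mat (0\<^sub>m a d) (1\<^sub>m a) (1\<^sub>m d) (0\<^sub>m d a :: 'a mat)"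
  have P: "P \<in> carrier_mat (d + a) (d + a)" and Q: "Q \<in> carrier_mat (d + a) (d + a)"
    unfolding P_def Q_def by (auto simp: add.commute)
  note mult =
    mult_four_block_mat[OF zero_carrier_mat one_carrier_mat one_carrier_mat zero_carrier_mat]
  note mult_perm = mult[OF zero_carrier_mat one_carrier_mat one_carrier_mat zero_carrier_mat]
  have "P * Q = four_block_mat (1\<^sub>m d) (0\<^sub>m d a) (0\<^sub>m a d) (1\<^sub>m a)"
    unfolding P_def Q_def mult_perm by simp
  hence PQ: "P * Q = 1\<^sub>m (d + a)" by simp
  have "Q * P = four_block_mat (1\<^sub>m a) (0\<^sub>m a d) (0\<^sub>m d a) (1\<^sub>m d)"
    unfolding P_def Q_def mult_perm by simp
  hence QP: "Q * P = 1\<^sub>m (d + a)" by (simp add: add.commute)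
  have "P * four_block_mat A (0\<^sub>m a d) (0\<^sub>m d a) D = four_block_mat (0\<^sub>m d a) D A (0\<^sub>m a d)"
    unfolding P_def mult[OF A zero_carrier_mat zero_carrier_mat D] using A D by simp
  moreover have
    "four_block_mat (0\<^sub>m d a) D A (0\<^sub>m a d) * Q = four_block_mat D (0\<^sub>m d a) (0\<^sub>m a d) A"
    unfolding Q_def mult_four_block_mat[OF zero_carrier_mat D A zero_carrier_mat
        zero_carrier_mat one_carrier_mat one_carrier_mat zero_carrier_mat] using A D by simp
  ultimately have
    "four_block_mat D (0\<^sub>m d a) (0\<^sub>m a d) A = P * four_block_mat A (0\<^sub>m a d) (0\<^sub>m d a) D * Q"
    by simp
  thus ?thesis using A D P Q
    by (intro similar_matI[OF _ PQ QP]) (auto simp: add.commute)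
qed

text \<open>The truncated shift: the n x n matrix with ones on the superdiagonal in columns 1..d-1.
  For d = n it is the nilpotent Jordan block of size n, and for d = n-1 it is the nilpotent
  Jordan matrix with blocks of sizes n-1 and 1.\<close>
definition shift_mat :: "nat \<Rightarrow> nat \<Rightarrow> 'a :: {zero, one} mat" where
  "shift_mat n d = mat n n (\<lambda>(i, j). if Suc i = j \<and> j < d then 1 else 0)"

lemma shift_mat_dim[simp]: "dim_row (shift_mat n d) = n" "dim_col (shift_mat n d) = n"
  by (simp_all add: shift_mat_def)

lemma shift_mat_index[simp]:
  "i < n \<Longrightarrow> j < n \<Longrightarrow> shift_mat n d $$ (i, j) = (if Suc i = j \<and> j < d then 1 else 0)"
  by (simp add: shift_mat_def)

lemma jordan_block_zero_shift: "jordan_block n 0 = shift_mat n n"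
  by (intro eq_matI) auto

lemma hook_jordan_shift:
  "four_block_mat (jordan_block d 0) (0\<^sub>m d 1) (0\<^sub>m 1 d) (jordan_block 1 0) = shift_mat (Suc d) d"
  by (intro eq_matI) auto

lemma shape_single_block_similar:
  fixes A :: "'a :: field mat"
  assumes "A \<in> carrier_mat n n" "nilpotent_mat A" "has_shape A [n]"
  shows "similar_mat A (shift_mat n n)"
proof -
  obtain ms where jnf: "jordan_nf A (map (\<lambda>m. (m, 0)) ms)" and "mset ms = mset [n]"
    by (rule nilpotent_shape_jordan_nf[OF assms])
  then have "ms = [n]" by simp
  with jnf show ?thesis
    unfolding jordan_nf_def by (simp add: jordan_matrix_single jordan_block_zero_shift)
qed

lemma shape_hook_similar:
  fixes X :: "'a :: field mat"
  assumes "X \<in> carrier_mat (Suc d) (Suc d)" "nilpotent_mat X" "has_shape X [d, 1]"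
  shows "similar_mat X (shift_mat (Suc d) d)"
proof -
  obtain ms where jnf: "jordan_nf X (map (\<lambda>m. (m, 0)) ms)" and ms: "mset ms = mset [d, 1]"
    by (rule nilpotent_shape_jordan_nf[OF assms])
  have "length ms = 2" using arg_cong[OF ms, of size] by simp
  then obtain x y where "ms = [x, y]"
    by (auto simp: numeral_2_eq_2 length_Suc_conv)
  with ms have "ms = [d, 1] \<or> ms = [1, d]" by (auto simp: add_eq_conv_diff)
  thus ?thesis
  proof
    assume "ms = [d, 1]"
    with jnf have "similar_mat X (jordan_matrix [(d, 0), (1, 0)])" unfolding jordan_nf_def by simp
    thus ?thesis unfolding jordan_matrix_two hook_jordan_shift .
  next
    assume "ms = [1, d]"
    with jnf have "similar_mat X (jordan_matrix [(1, 0), (d, 0)])" unfolding jordan_nf_def by simp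
    from similar_mat_trans[OF this[unfolded jordan_matrix_two] block_swap_similar]
    show ?thesis unfolding hook_jordan_shift by simp
  qed
qed

lemma commuting_conjugate:
  fixes A B J :: "'a :: field mat"
  assumes A: "A \<in> carrier_mat n n" and B: "B \<in> carrier_mat n n"
    and sim: "similar_mat A J" and AB: "A * B = B * A" and nil: "nilpotent_mat B"
  obtains B' where "B' \<in> carrier_mat n n" "B' * J = J * B'" "nilpotent_mat B'"
    "kernel.dim n B' = kernel.dim n B" "kernel.dim n (B' * B') = kernel.dim n (B * B)"
    "B' * B' = 0\<^sub>m n n \<longleftrightarrow> B * B = 0\<^sub>m n n"
proof -
  from sim obtain P Q where wit: "similar_mat_wit A J P Q" unfolding similar_mat_def by auto
  note w = similar_mat_witD2[OF A wit]
  have P: "P \<in> carrier_mat n n" and Q: "Q \<in> carrier_mat n n" and J: "J \<in> carrier_mat n n"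
    and PQ: "P * Q = 1\<^sub>m n" and QP: "Q * P = 1\<^sub>m n" using w by auto
  note assoc = assoc_mult_mat[of _ n n _ n _ n]
  have JA: "J = Q * A * P"
    using similar_mat_witD2(3)[OF J similar_mat_wit_sym[OF wit]] .
  define B' where "B' = Q * B * P"
  have B': "B' \<in> carrier_mat n n" unfolding B'_def using P Q B by auto
  have "B = (P * Q) * B * (P * Q)" using B by (simp add: PQ)
  hence "B = P * B' * Q" unfolding B'_def using P Q B by (simp add: assoc)
  hence wit': "similar_mat_wit B B' P Q"
    by (intro similar_mat_witI[OF PQ QP _ B B' P Q])
  have "B' * J = Q * B * (P * Q) * A * P" unfolding B'_def JA using P Q A B by (simp add: assoc)
  also have "\<dots> = Q * (B * A) * P" using P Q A B by (simp add: PQ assoc)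
  also have "\<dots> = Q * (A * B) * P" by (simp add: AB)
  also have "\<dots> = Q * A * (P * Q) * B * P" using P Q A B by (simp add: PQ assoc)
  also have "\<dots> = J * B'" unfolding B'_def JA using P Q A B by (simp add: assoc)
  finally have comm: "B' * J = J * B'" .
  have wit2: "similar_mat_wit (B * B) (B' * B') P Q"
    using similar_mat_wit_pow[OF wit', of 2] B B' by (simp add: numeral_2_eq_2)
  have BB: "B * B \<in> carrier_mat n n" and BB': "B' * B' \<in> carrier_mat n n" using B B' by auto
  have "B * B = P * (B' * B') * Q" by (rule similar_mat_witD2(3)[OF BB wit2])
  moreover have "B' * B' = Q * (B * B) * P"
    by (rule similar_mat_witD2(3)[OF BB' similar_mat_wit_sym[OF wit2]])
  ultimately have "B' * B' = 0\<^sub>m n n \<longleftrightarrow> B * B = 0\<^sub>m n n" using P Q by auto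
  with that[OF B' comm nilpotent_similar_wit[OF wit' B nil]] show ?thesis
    using similar_mat_wit_kernel_dim[OF B wit'] similar_mat_wit_kernel_dim[OF BB wit2] by simp
qed

lemma shift_commute_entry:
  fixes M :: "'a :: comm_ring_1 mat"
  assumes M: "M \<in> carrier_mat n n" and d: "d \<le> n"
    and comm: "M * shift_mat n d = shift_mat n d * M" and i: "i < n" and j: "j < n"
  shows "(if 0 < j \<and> j < d then M $$ (i, j - 1) else 0) =
    (if Suc i < d then M $$ (Suc i, j) else 0)"
proof -
  have "(M * shift_mat n d) $$ (i, j) = (\<Sum>l\<in>{0..<n}. M $$ (i, l) * shift_mat n d $$ (l, j))"
    using M i j by (simp add: scalar_prod_def)
  also have "\<dots> = (\<Sum>l\<in>{0..<n}. if l = j - 1 then (if 0 < j \<and> j < d then M $$ (i, l) else 0) else 0)"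
    using j by (intro sum.cong) auto
  also have "\<dots> = (if 0 < j \<and> j < d then M $$ (i, j - 1) else 0)"
    using j by (subst sum.delta) auto
  finally have right:
    "(M * shift_mat n d) $$ (i, j) = (if 0 < j \<and> j < d then M $$ (i, j - 1) else 0)" .
  have "(shift_mat n d * M) $$ (i, j) = (\<Sum>l\<in>{0..<n}. shift_mat n d $$ (i, l) * M $$ (l, j))"
    using M i j by (simp add: scalar_prod_def)
  also have "\<dots> = (\<Sum>l\<in>{0..<n}. if l = Suc i then (if Suc i < d then M $$ (l, j) else 0) else 0)"
    using i by (intro sum.cong) auto
  also have "\<dots> = (if Suc i < d then M $$ (Suc i, j) else 0)"
    using d by (subst sum.delta) auto
  finally have left: "(shift_mat n d * M) $$ (i, j) = (if Suc i < d then M $$ (Suc i, j) else 0)" .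
  from right left comm show ?thesis by simp
qed

lemma shift_commutant:
  fixes M :: "'a :: comm_ring_1 mat"
  assumes M: "M \<in> carrier_mat n n" and d: "d \<le> n" and comm: "M * shift_mat n d = shift_mat n d * M"
  shows shift_commutant_toeplitz:
      "\<And>i j. i < d \<Longrightarrow> j < d \<Longrightarrow> M $$ (i, j) = (if i \<le> j then M $$ (0, j - i) else 0)"
    and shift_commutant_lower:
      "\<And>i j. d \<le> i \<Longrightarrow> i < n \<Longrightarrow> Suc j < d \<Longrightarrow> M $$ (i, j) = 0"
    and shift_commutant_upper:
      "\<And>i j. 0 < i \<Longrightarrow> i < d \<Longrightarrow> d \<le> j \<Longrightarrow> j < n \<Longrightarrow> M $$ (i, j) = 0"
proof -
  note entry = shift_commute_entry[OF M d comm]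
  show "M $$ (i, j) = (if i \<le> j then M $$ (0, j - i) else 0)" if "i < d" "j < d" for i j
    using that
  proof (induction i arbitrary: j)
    case (Suc i j)
    show ?case
    proof (cases j)
      case 0
      from entry[of i 0] Suc.prems d show ?thesis unfolding 0 by auto
    next
      case (Suc j')
      from entry[of i j] \<open>Suc i < d\<close> \<open>j < d\<close> d have "M $$ (i, j') = M $$ (Suc i, j)"
        unfolding Suc by auto
      with Suc.IH[of j'] \<open>Suc i < d\<close> \<open>j < d\<close> show ?thesis unfolding Suc by auto
    qed
  qed simp
  show "M $$ (i, j) = 0" if "d \<le> i" "i < n" "Suc j < d" for i j
    using entry[of i "Suc j"] that d by auto
  show "M $$ (i, j) = 0" if "0 < i" "i < d" "d \<le> j" "j < n" for i j
    using entry[of "i - 1" j] that d by auto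
qed

text \<open>They are the polynomials in the nilpotent Jordan block, and multiply by
  convolution of their coefficient sequences.\<close>
definition toep :: "nat \<Rightarrow> (nat \<Rightarrow> 'a :: comm_ring_1) \<Rightarrow> 'a mat" where
  "toep d f = mat d d (\<lambda>(i, j). if i \<le> j then f (j - i) else 0)"

definition conv :: "(nat \<Rightarrow> 'a :: comm_ring_1) \<Rightarrow> (nat \<Rightarrow> 'a) \<Rightarrow> nat \<Rightarrow> 'a" where
  "conv f g k = (\<Sum>a\<le>k. f a * g (k - a))"

lemma toep_carrier[simp]: "toep d f \<in> carrier_mat d d"
  by (simp add: toep_def)

lemma toep_dim[simp]: "dim_row (toep d f) = d" "dim_col (toep d f) = d"
  by (simp_all add: toep_def)

lemma toep_index[simp]:
  "i < d \<Longrightarrow> j < d \<Longrightarrow> toep d f $$ (i, j) = (if i \<le> j then f (j - i) else 0)"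
  by (simp add: toep_def)

lemma toep_mult: "toep d f * toep d g = toep d (conv f g)"
proof (rule eq_matI)
  fix i j assume "i < dim_row (toep d (conv f g))" and "j < dim_col (toep d (conv f g))"
  hence i: "i < d" and j: "j < d" by auto
  have "(toep d f * toep d g) $$ (i, j) =
      (\<Sum>l\<in>{0..<d}. (if i \<le> l then f (l - i) else 0) * (if l \<le> j then g (j - l) else 0))"
    using i j by (simp add: scalar_prod_def)
  also have "\<dots> = (if i \<le> j then conv f g (j - i) else 0)"
  proof (cases "i \<le> j")
    case True
    have "(\<Sum>l\<in>{0..<d}. (if i \<le> l then f (l - i) else 0) * (if l \<le> j then g (j - l) else 0))
        = (\<Sum>l\<in>{i..j}. f (l - i) * g (j - l))"
      using j by (intro sum.mono_neutral_cong_right) auto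
    also have "\<dots> = (\<Sum>a\<in>{0 + i..(j - i) + i}. f (a - i) * g (j - a))" using True by simp
    also have "\<dots> = (\<Sum>a\<in>{0..j - i}. f a * g (j - i - a))"
      by (subst sum.shift_bounds_cl_nat_ivl, rule sum.cong) (auto simp: add.commute)
    also have "\<dots> = conv f g (j - i)" unfolding conv_def by (simp add: atMost_atLeast0)
    finally show ?thesis using True by simp
  qed (auto intro: sum.neutral)
  finally show "(toep d f * toep d g) $$ (i, j) = toep d (conv f g) $$ (i, j)" using i j by simp
qed auto

lemma toep_zero: "(\<And>i. i < d \<Longrightarrow> f i = 0) \<Longrightarrow> toep d f = 0\<^sub>m d d"
  by (intro eq_matI) auto

lemma conv_leading:
  assumes f: "\<And>i. i < m \<Longrightarrow> f i = 0" and g: "\<And>i. i < m' \<Longrightarrow> g i = 0"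
  shows "k < m + m' \<Longrightarrow> conv f g k = 0" and "conv f g (m + m') = f m * g m'"
proof -
  have vanish: "f a * g (k - a) = 0" if "k < m + m' \<or> (k = m + m' \<and> a \<noteq> m)" "a \<le> k" for a k
  proof (cases "a < m")
    case False
    with that have "k - a < m'" by auto
    thus ?thesis using g by simp
  qed (simp add: f)
  show "k < m + m' \<Longrightarrow> conv f g k = 0"
    unfolding conv_def by (intro sum.neutral ballI vanish) auto
  have "conv f g (m + m') = (\<Sum>a\<le>m + m'. if a = m then f m * g m' else 0)"
    unfolding conv_def by (intro sum.cong refl) (auto intro: vanish)
  thus "conv f g (m + m') = f m * g m'" by simp
qed

lemma toep_det: "det (toep d (f :: nat \<Rightarrow> 'a :: field)) = f 0 ^ d"
proof -
  have "upper_triangular (toep d f)" by (auto simp: upper_triangular_def)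
  hence "det (toep d f) = prod_list (diag_mat (toep d f))"
    by (rule det_upper_triangular[OF _ toep_carrier])
  also have "diag_mat (toep d f) = replicate d (f 0)"
    by (intro nth_equalityI) (auto simp: diag_mat_def)
  finally show ?thesis by simp
qed

lemma toep_jordan_block_pow:
  "toep d (\<lambda>i. if i = m then 1 else 0) = (jordan_block d (0 :: 'a :: field)) ^\<^sub>m m"
  unfolding jordan_block_zero_pow by (intro eq_matI) auto

text \<open>The kernel dimension of a Toeplitz matrix is its order of vanishing m: it factors as
  the m-th power of the Jordan block times an invertible Toeplitz matrix.\<close>
lemma toep_kernel_dim:
  fixes f :: "nat \<Rightarrow> 'a :: field"
  assumes m: "m < d" and fm: "f m \<noteq> 0" and low: "\<And>i. i < m \<Longrightarrow> f i = 0"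
  shows "kernel.dim d (toep d f) = m"
proof -
  let ?g = "\<lambda>i. f (i + m)"
  have "conv (\<lambda>i. if i = m then 1 else 0) ?g = f"
  proof
    fix k
    have "conv (\<lambda>i. if i = m then 1 else 0) ?g k = (\<Sum>a\<le>k. if a = m then ?g (k - a) else 0)"
      unfolding conv_def by (rule sum.cong) auto
    also have "\<dots> = f k" using low by (subst sum.delta) auto
    finally show "conv (\<lambda>i. if i = m then 1 else 0) ?g k = f k" .
  qed
  hence factor: "toep d f = (jordan_block d 0) ^\<^sub>m m * toep d ?g"
    unfolding toep_jordan_block_pow[symmetric] toep_mult by simp
  have "det (toep d ?g) \<noteq> 0" unfolding toep_det using fm by simp
  from det_non_zero_imp_unit[OF toep_carrier this, of undefined]
  obtain C where C: "C \<in> carrier_mat d d" "toep d ?g * C = 1\<^sub>m d"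
    unfolding Units_def ring_mat_def by auto
  have "kernel.dim d (toep d f) = kernel.dim d ((jordan_block d (0 :: 'a)) ^\<^sub>m m)"
    unfolding factor by (rule mat_kernel_dim_mult_eq_right[OF _ toep_carrier C]) auto
  also have "\<dots> = m" using dim_kernel_zero_jordan_block_pow[of d m, where 'a = 'a] m by simp
  finally show ?thesis .
qed

lemma first_nonzero:
  fixes f :: "nat \<Rightarrow> 'a :: zero"
  assumes "f i \<noteq> 0"
  obtains m where "m \<le> i" "f m \<noteq> 0" "\<And>j. j < m \<Longrightarrow> f j = 0"
proof
  show "(LEAST m. f m \<noteq> 0) \<le> i" by (rule Least_le) fact
  show "f (LEAST m. f m \<noteq> 0) \<noteq> 0" by (rule LeastI[of "\<lambda>m. f m \<noteq> 0"]) fact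
  show "f j = 0" if "j < (LEAST m. f m \<noteq> 0)" for j using not_less_Least[OF that] by simp
qed

lemma kernel_dim_zero_mat: "kernel.dim d (0\<^sub>m d d :: 'a :: field mat) = d"
proof -
  have "(jordan_block d (0 :: 'a)) ^\<^sub>m d = 0\<^sub>m d d"
    unfolding jordan_block_zero_pow by (intro eq_matI) auto
  with dim_kernel_zero_jordan_block_pow[of d d, where 'a = 'a] show ?thesis by simp
qed

lemma zero_cols_kernel_dim:
  fixes M :: "'a :: field mat"
  assumes M: "M \<in> carrier_mat n n" and S: "S \<subseteq> {..<n}"
    and zero: "\<And>i j. j \<in> S \<Longrightarrow> i < n \<Longrightarrow> M $$ (i, j) = 0"
  shows "card S \<le> kernel.dim n M"
proof -
  interpret K: kernel n n M by (unfold_locales, rule M)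
  let ?U = "unit_vec n ` S :: 'a vec set"
  have sub: "?U \<subseteq> mat_kernel M"
  proof
    fix v :: "'a vec" assume "v \<in> ?U"
    then obtain j where j: "j \<in> S" and v: "v = unit_vec n j" by auto
    from j S have jn: "j < n" by auto
    have "M *\<^sub>v v = 0\<^sub>v n" unfolding v mult_unit_vec[OF M jn]
      using M jn zero[OF j] by (intro eq_vecI) auto
    thus "v \<in> mat_kernel M" by (intro mat_kernelI[OF M]) (auto simp: v)
  qed
  have "?U \<subseteq> set (unit_vecs n)" using S unfolding unit_vecs_def by auto
  moreover have "\<not> K.NC.lin_dep (set (unit_vecs n))"
    using K.NC.unit_vecs_basis unfolding K.NC.basis_def by auto
  ultimately have "\<not> K.Ker.lin_dep ?U" using K.NC.supset_ld_is_ld K.lindep_same[OF sub] by auto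
  moreover from kernel_basis_exists[OF M] obtain bas where "finite bas" "K.Ker.basis bas" by auto
  hence "K.Ker.fin_dim" unfolding K.Ker.fin_dim_def K.Ker.basis_def by auto
  moreover have "card ?U = card S" using S by (intro card_image) (auto simp: inj_on_def)
  ultimately show ?thesis using K.Ker.li_le_dim(2)[OF _ sub] by simp
qed

definition add_col_mat :: "nat \<Rightarrow> nat \<Rightarrow> nat \<Rightarrow> 'a \<Rightarrow> 'a :: comm_ring_1 mat" where
  "add_col_mat n m l c = mat n n (\<lambda>(i, j). if i = j then 1 else if i = m \<and> j = l then c else 0)"

lemma add_col_mat_carrier[simp]: "add_col_mat n m l c \<in> carrier_mat n n"
  by (simp add: add_col_mat_def)

lemma add_col_mat_mult:
  fixes M :: "'a :: comm_ring_1 mat"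
  assumes M: "M \<in> carrier_mat nr n" and i: "i < nr" and j: "j < n" and m: "m < n" and ml: "m \<noteq> l"
  shows "(M * add_col_mat n m l c) $$ (i, j) = M $$ (i, j) + (if j = l then c * M $$ (i, m) else 0)"
proof -
  have "(M * add_col_mat n m l c) $$ (i, j) =
      (\<Sum>k\<in>{0..<n}. M $$ (i, k) * add_col_mat n m l c $$ (k, j))"
    using M i j by (simp add: scalar_prod_def add_col_mat_def)
  also have "\<dots> = (\<Sum>k\<in>{0..<n}. (if k = j then M $$ (i, k) else 0)
      + (if k = m then (if j = l then c * M $$ (i, k) else 0) else 0))"
    using j ml by (intro sum.cong) (auto simp: add_col_mat_def)
  also have "\<dots> = M $$ (i, j) + (if j = l then c * M $$ (i, m) else 0)"
    using j m by (simp add: sum.distrib)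
  finally show ?thesis .
qed

lemma add_col_mat_inverse:
  assumes m: "m < n" and ml: "m \<noteq> l"
  shows "add_col_mat n m l c * add_col_mat n m l (- c) = (1\<^sub>m n :: 'a :: comm_ring_1 mat)"
proof (rule eq_matI)
  fix i j assume "i < dim_row (1\<^sub>m n :: 'a mat)" "j < dim_col (1\<^sub>m n :: 'a mat)"
  hence i: "i < n" and j: "j < n" by auto
  show "(add_col_mat n m l c * add_col_mat n m l (- c)) $$ (i, j) = 1\<^sub>m n $$ (i, j)"
    unfolding add_col_mat_mult[OF add_col_mat_carrier i j m ml] using i j m ml
    by (auto simp: add_col_mat_def)
qed (auto simp: add_col_mat_def)

lemma kernel_dim_dependent_col:
  fixes M :: "'a :: field mat"
  assumes M: "M \<in> carrier_mat n n" and S: "S \<subseteq> {..<n}"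
    and zero: "\<And>i j. j \<in> S \<Longrightarrow> i < n \<Longrightarrow> M $$ (i, j) = 0"
    and m: "m < n" and l: "l < n" "l \<notin> S" and ml: "m \<noteq> l"
    and dep: "\<And>i. i < n \<Longrightarrow> M $$ (i, l) = c * M $$ (i, m)"
  shows "Suc (card S) \<le> kernel.dim n M"
proof -
  let ?M' = "M * add_col_mat n m l (- c)"
  have "kernel.dim n ?M' = kernel.dim n M"
    using add_col_mat_inverse[OF m ml, of "- c"]
    by (intro mat_kernel_dim_mult_eq_right[OF M add_col_mat_carrier add_col_mat_carrier]) simp
  moreover have "card (insert l S) \<le> kernel.dim n ?M'"
  proof (rule zero_cols_kernel_dim)
    fix i j assume j: "j \<in> insert l S" and i: "i < n"
    with S l have "j < n" by auto
    with j i show "?M' $$ (i, j) = 0"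
      unfolding add_col_mat_mult[OF M i \<open>j < n\<close> m ml] using zero dep l by auto
  qed (use M S l in auto)
  moreover have "card (insert l S) = Suc (card S)"
    using S l finite_subset[OF S] by simp
  ultimately show ?thesis by simp
qed

text \<open>A matrix B commuting with the full shift is an upper
  triangular Toeplitz matrix; if its first nonzero coefficient is at index k, then
  dim ker B = k, dim ker B^2 = 2k, and 2k < n unless B^2 = 0.\<close>
lemma regular_commutant_kernel_dims:
  fixes B :: "'a :: field mat"
  assumes B: "B \<in> carrier_mat n n" and BB: "B * B \<noteq> 0\<^sub>m n n"
    and comm: "B * shift_mat n n = shift_mat n n * B"
  shows "2 * kernel.dim n B < n" and "kernel.dim n (B * B) = 2 * kernel.dim n B"
proof -
  define b where "b i = B $$ (0, i)" for i
  have Bt: "B = toep n b"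
    using B shift_commutant_toeplitz[OF B le_refl comm] unfolding b_def by (intro eq_matI) auto
  have "\<exists>i<n. b i \<noteq> 0"
  proof (rule ccontr)
    assume "\<not> (\<exists>i<n. b i \<noteq> 0)"
    hence "B = 0\<^sub>m n n" unfolding Bt by (intro toep_zero) auto
    with BB B show False by simp
  qed
  then obtain i where i: "i < n" and bi: "b i \<noteq> 0" by blast
  obtain k where "k \<le> i" and bk: "b k \<noteq> 0" and low: "\<And>j. j < k \<Longrightarrow> b j = 0"
    using first_nonzero[of b i, OF bi] by blast
  with i have kn: "k < n" by simp
  have square: "B * B = toep n (conv b b)" unfolding Bt toep_mult ..
  note leading = conv_leading[of k b k b, OF low low]
  have kk: "2 * k < n"
  proof (rule ccontr)
    assume "\<not> 2 * k < n"
    hence "B * B = 0\<^sub>m n n" unfolding square by (intro toep_zero leading) auto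
    with BB show False ..
  qed
  have "kernel.dim n B = k" unfolding Bt using kn bk low by (rule toep_kernel_dim)
  moreover have "kernel.dim n (B * B) = 2 * k"
    unfolding square using kk leading bk by (intro toep_kernel_dim) (auto simp: mult_2)
  ultimately show "2 * kernel.dim n B < n" and "kernel.dim n (B * B) = 2 * kernel.dim n B"
    using kk by simp_all
qed

lemma regular_shape_commutant_kernel_dims:
  fixes B :: "'a :: field mat"
  assumes B: "B \<in> carrier_mat n n" and nil: "nilpotent_mat B" and BB: "B * B \<noteq> 0\<^sub>m n n"
    and A: "A \<in> nil_commutator n B" and shape: "has_shape A [n]"
  shows "2 * kernel.dim n B < n \<and> kernel.dim n (B * B) = 2 * kernel.dim n B"
proof -
  from A have Ac: "A \<in> carrier_mat n n" and nilA: "nilpotent_mat A" and AB: "A * B = B * A"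
    unfolding nil_commutator_def by auto
  obtain B' :: "'a mat" where B': "B' \<in> carrier_mat n n" "B' * shift_mat n n = shift_mat n n * B'"
    and "nilpotent_mat B'"
    and dims: "kernel.dim n B' = kernel.dim n B" "kernel.dim n (B' * B') = kernel.dim n (B * B)"
    and zero: "B' * B' = 0\<^sub>m n n \<longleftrightarrow> B * B = 0\<^sub>m n n"
    by (rule commuting_conjugate[OF Ac B shape_single_block_similar[OF Ac nilA shape] AB nil])
  from regular_commutant_kernel_dims[OF B'(1) _ B'(2)] zero BB dims show ?thesis by simp
qed

definition hook_mat :: "nat \<Rightarrow> (nat \<Rightarrow> 'a) \<Rightarrow> 'a \<Rightarrow> 'a \<Rightarrow> 'a :: comm_ring_1 mat" where
  "hook_mat d t a b = four_block_mat (toep d t) (mat d 1 (\<lambda>(i, _). if i = 0 then a else 0))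
     (mat 1 d (\<lambda>(_, j). if Suc j = d then b else 0)) (0\<^sub>m 1 1)"

lemma hook_mat_dim[simp]: "dim_row (hook_mat d t a b) = Suc d" "dim_col (hook_mat d t a b) = Suc d"
  unfolding hook_mat_def by simp_all

lemma hook_mat_carrier[simp]: "hook_mat d t a b \<in> carrier_mat (Suc d) (Suc d)"
  unfolding carrier_mat_def by simp

lemma hook_mat_index:
  assumes "i < Suc d" "j < Suc d"
  shows "hook_mat d t a b $$ (i, j) =
    (if i < d \<and> j < d then (if i \<le> j then t (j - i) else 0)
     else if i < d then (if i = 0 then a else 0)
     else if j < d then (if Suc j = d then b else 0)
     else 0)"
  using assms unfolding hook_mat_def by auto

text \<open>A nilpotent matrix commuting with the shift truncated at d is a hook matrix whose
  Toeplitz block has zero diagonal; nilpotency kills the diagonal entries at (0, 0) and (d, d).\<close>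
lemma hook_commutant_form:
  fixes B :: "'a :: field mat"
  assumes B: "B \<in> carrier_mat (Suc d) (Suc d)" and nil: "nilpotent_mat B" and d: "2 \<le> d"
    and comm: "B * shift_mat (Suc d) d = shift_mat (Suc d) d * B"
  obtains t a b where "B = hook_mat d t a b" and "t 0 = 0"
proof -
  have le: "d \<le> Suc d" by simp
  note toeplitz = shift_commutant_toeplitz[OF B le comm]
    and lower = shift_commutant_lower[OF B le comm]
    and upper = shift_commutant_upper[OF B le comm]
  have col0: "B $$ (i, 0) = 0" if "0 < i" "i < Suc d" for i
    using that toeplitz[of i 0] lower[of i 0] d by (cases "i < d") auto
  have t0: "B $$ (0, 0) = 0" by (rule nilpotent_diag_zero[OF B nil]) (use col0 in auto)
  have col0': "B $$ (i, 0) = 0" if "i < Suc d" for i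
    using that col0 t0 by (cases i) auto
  have g0: "B $$ (d, d) = 0"
    by (rule nilpotent_col_pair_diag_zero[OF B nil, of 0]) (use col0' upper d in auto)
  have "B = hook_mat d (\<lambda>i. B $$ (0, i)) (B $$ (0, d)) (B $$ (d, d - 1))"
  proof (rule eq_matI)
    fix i j assume "i < dim_row (hook_mat d (\<lambda>i. B $$ (0, i)) (B $$ (0, d)) (B $$ (d, d - 1)))"
      and "j < dim_col (hook_mat d (\<lambda>i. B $$ (0, i)) (B $$ (0, d)) (B $$ (d, d - 1)))"
    hence i: "i < Suc d" and j: "j < Suc d" by simp_all
    show "B $$ (i, j) = hook_mat d (\<lambda>i. B $$ (0, i)) (B $$ (0, d)) (B $$ (d, d - 1)) $$ (i, j)"
    proof (cases "i < d"; cases "j < d")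
      assume "i < d" "\<not> j < d"
      with j have "j = d" by simp
      with \<open>i < d\<close> show ?thesis unfolding hook_mat_index[OF i j] using upper[of i j] by simp
    next
      assume "\<not> i < d" "j < d"
      with i have "i = d" by simp
      with \<open>j < d\<close> show ?thesis unfolding hook_mat_index[OF i j] using lower[of i j] by auto
    next
      assume "\<not> i < d" "\<not> j < d"
      with i j have "i = d" "j = d" by simp_all
      with g0 show ?thesis unfolding hook_mat_index[OF i j] by simp
    qed (simp add: hook_mat_index[OF i j] toeplitz)
  qed (use B in auto)
  with t0 show ?thesis using that by blast
qed

lemma hook_mat_square:
  assumes d: "2 \<le> d" and t0: "t 0 = 0"
  shows "hook_mat d t a b * hook_mat d t a b =
    four_block_mat (toep d (\<lambda>i. conv t t i + (if Suc i = d then a * b else 0)))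
      (0\<^sub>m d 1) (0\<^sub>m 1 d) (0\<^sub>m 1 1)"
proof -
  define U where "U = mat d 1 (\<lambda>(i, _). if i = 0 then a else 0)"
  define W where "W = mat 1 d (\<lambda>(_, j). if Suc j = d then b else 0)"
  have U: "U \<in> carrier_mat d 1" and W: "W \<in> carrier_mat 1 d" unfolding U_def W_def by auto
  have "toep d t * toep d t + U * W = toep d (\<lambda>i. conv t t i + (if Suc i = d then a * b else 0))"
    using d unfolding toep_mult U_def W_def by (intro eq_matI) (auto simp: scalar_prod_def)
  moreover have "toep d t * U = 0\<^sub>m d 1"
    using d t0 unfolding U_def by (intro eq_matI) (auto simp: scalar_prod_def)
  moreover have "W * toep d t = 0\<^sub>m 1 d"
    using d t0 unfolding W_def by (intro eq_matI) (auto simp: scalar_prod_def)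
  moreover have "W * U = 0\<^sub>m 1 1"
    using d unfolding U_def W_def by (intro eq_matI) (auto simp: scalar_prod_def)
  ultimately show ?thesis
    unfolding hook_mat_def U_def[symmetric] W_def[symmetric]
      mult_four_block_mat[OF toep_carrier U W zero_carrier_mat toep_carrier U W zero_carrier_mat]
    using U W by simp
qed

lemma hook_zero_cols:
  assumes low: "\<And>i. i < m \<Longrightarrow> t i = 0" and m: "m < d" and j: "j < m" and i: "i < Suc d"
  shows "hook_mat d t a b $$ (i, j) = 0"
proof -
  have "j < Suc d" using j m by simp
  with i j m low show ?thesis unfolding hook_mat_index[OF i \<open>j < Suc d\<close>] by auto
qed

lemma hook_kernel_dim_ge:
  fixes t :: "nat \<Rightarrow> 'a :: field"
  assumes low: "\<And>i. i < m \<Longrightarrow> t i = 0" and m: "m < d"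
  shows "m \<le> kernel.dim (Suc d) (hook_mat d t a b)"
proof -
  have "card {..<m} \<le> kernel.dim (Suc d) (hook_mat d t a b)"
    by (rule zero_cols_kernel_dim[OF hook_mat_carrier])
      (use m hook_zero_cols[where t = t and m = m, OF low m] in auto)
  thus ?thesis by simp
qed

text \<open>If moreover t m \<noteq> 0 and m + 1 < d, then the last column is a multiple of
  column m, which gives one more kernel vector.\<close>
lemma hook_kernel_dim_gt:
  fixes t :: "nat \<Rightarrow> 'a :: field"
  assumes low: "\<And>i. i < m \<Longrightarrow> t i = 0" and tm: "t m \<noteq> 0" and m: "Suc m < d"
  shows "Suc m \<le> kernel.dim (Suc d) (hook_mat d t a b)"
proof -
  have "Suc (card {..<m}) \<le> kernel.dim (Suc d) (hook_mat d t a b)"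
  proof (rule kernel_dim_dependent_col[OF hook_mat_carrier,
        where m = m and l = d and c = "a / t m"])
    fix i assume i: "i < Suc d"
    have "m < Suc d" using m by simp
    with i m low tm show "hook_mat d t a b $$ (i, d) = a / t m * hook_mat d t a b $$ (i, m)"
      unfolding hook_mat_index[OF i lessI] hook_mat_index[OF i \<open>m < Suc d\<close>] by auto
  qed (use m hook_zero_cols[where t = t and m = m, OF low] in auto)
  thus ?thesis by simp
qed

text \<open>If t m is the first nonzero coefficient and 2m + 1 < d, the square has kernel
  dimension 2m + 1: the corner term a b sits beyond the order 2m of T^2.\<close>
lemma hook_square_kernel_dim:
  fixes t :: "nat \<Rightarrow> 'a :: field"
  assumes low: "\<And>i. i < m \<Longrightarrow> t i = 0" and tm: "t m \<noteq> 0" and t0: "t 0 = 0"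
    and m: "Suc (2 * m) < d"
  shows "kernel.dim (Suc d) (hook_mat d t a b * hook_mat d t a b) = Suc (2 * m)"
proof -
  have d: "2 \<le> d" using m by simp
  note leading = conv_leading[of m t m t, OF low low]
  have "kernel.dim d (toep d (\<lambda>i. conv t t i + (if Suc i = d then a * b else 0))) = 2 * m"
    by (rule toep_kernel_dim) (use m leading tm in \<open>auto simp: mult_2\<close>)
  thus ?thesis
    using kernel_four_block_0_mat[OF hook_mat_square[where t = t and a = a and b = b, OF d t0]
        toep_carrier zero_carrier_mat] kernel_dim_zero_mat[of 1]
    by simp
qed

text \<open>Let m be the first index below d - 1 with t m \<noteq> 0: if
  none exists, k \<ge> d - 1; if 2m + 1 < d, dim ker B^2 is odd; otherwise k \<ge> m + 1.\<close>
lemma hook_commutant_kernel_dims: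
  fixes B :: "'a :: field mat"
  assumes B: "B \<in> carrier_mat (Suc d) (Suc d)" and nil: "nilpotent_mat B" and d: "3 \<le> d"
    and comm: "B * shift_mat (Suc d) d = shift_mat (Suc d) d * B"
    and small: "2 * kernel.dim (Suc d) B < Suc d"
  shows "kernel.dim (Suc d) (B * B) \<noteq> 2 * kernel.dim (Suc d) B"
proof
  assume square: "kernel.dim (Suc d) (B * B) = 2 * kernel.dim (Suc d) B"
  obtain t a b where Bh: "B = hook_mat d t a b" and t0: "t 0 = 0"
    using hook_commutant_form[OF B nil _ comm] d by auto
  show False
  proof (cases "\<exists>i < d - 1. t i \<noteq> 0")
    case False
    hence "d - 1 \<le> kernel.dim (Suc d) B" unfolding Bh using d by (intro hook_kernel_dim_ge) auto
    with small d show False by linarith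
  next
    case True
    then obtain i where i: "i < d - 1" and ti: "t i \<noteq> 0" by blast
    obtain m where "m \<le> i" and tm: "t m \<noteq> 0" and low: "\<And>j. j < m \<Longrightarrow> t j = 0"
      using first_nonzero[of t i, OF ti] by blast
    with i have m: "m < d - 1" by simp
    show False
    proof (cases "Suc (2 * m) < d")
      case True
      have "Suc (2 * m) = 2 * kernel.dim (Suc d) B"
        using square hook_square_kernel_dim[where t = t and a = a and b = b, OF low tm t0 True]
        unfolding Bh by simp
      thus False by presburger
    next
      case False
      have "Suc m \<le> kernel.dim (Suc d) B"
        unfolding Bh using m by (intro hook_kernel_dim_gt[where t = t, OF low tm]) auto
      with small False show False by linarith
    qed
  qed
qed

lemma hook_shape_commutant_kernel_dims:
  fixes B :: "'a :: field mat"
  assumes B: "B \<in> carrier_mat (Suc d) (Suc d)" and nil: "nilpotent_mat B" and d: "3 \<le> d"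
    and X: "X \<in> nil_commutator (Suc d) B" and shape: "has_shape X [d, 1]"
    and small: "2 * kernel.dim (Suc d) B < Suc d"
  shows "kernel.dim (Suc d) (B * B) \<noteq> 2 * kernel.dim (Suc d) B"
proof -
  from X have Xc: "X \<in> carrier_mat (Suc d) (Suc d)" and nilX: "nilpotent_mat X"
    and XB: "X * B = B * X"
    unfolding nil_commutator_def by auto
  obtain B' :: "'a mat" where B': "B' \<in> carrier_mat (Suc d) (Suc d)"
      "B' * shift_mat (Suc d) d = shift_mat (Suc d) d * B'" "nilpotent_mat B'"
    and dims: "kernel.dim (Suc d) B' = kernel.dim (Suc d) B"
      "kernel.dim (Suc d) (B' * B') = kernel.dim (Suc d) (B * B)"
    and "B' * B' = 0\<^sub>m (Suc d) (Suc d) \<longleftrightarrow> B * B = 0\<^sub>m (Suc d) (Suc d)"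
    by (rule commuting_conjugate[OF Xc B shape_hook_similar[OF Xc nilX shape] XB nil])
  from hook_commutant_kernel_dims[OF B'(1,3) d B'(2)] small dims show ?thesis by simp
qed

theorem lemma2p2:
  fixes B :: "'a :: field_char_0 mat" and n :: nat
  assumes "alg_closed_type TYPE('a)"
    and "n \<ge> 4"
    and "B \<in> carrier_mat n n"
    and "nilpotent_mat B"
    and "B * B \<noteq> 0\<^sub>m n n"
  shows "\<exists>mu. is_partition n mu \<and> \<not> (\<exists>A \<in> nil_commutator n B. has_shape A mu)"
proof (cases "\<exists>A \<in> nil_commutator n B. has_shape A [n]")
  case False
  moreover have "is_partition n [n]" using assms(2) by (simp add: is_partition_def)
  ultimately show ?thesis by blast
next
  case True
  then obtain A where "A \<in> nil_commutator n B" and "has_shape A [n]" by blast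
  from regular_shape_commutant_kernel_dims[OF assms(3-5) this]
  have small: "2 * kernel.dim n B < n" and square: "kernel.dim n (B * B) = 2 * kernel.dim n B"
    by simp_all
  obtain d where n: "n = Suc d" and d: "3 \<le> d" using assms(2) by (cases n) auto
  have "\<not> (\<exists>X \<in> nil_commutator n B. has_shape X [n - 1, 1])"
    using hook_shape_commutant_kernel_dims[of B d] assms(3,4) small square d unfolding n by auto
  moreover have "is_partition n [n - 1, 1]" using assms(2) by (auto simp: is_partition_def)
  ultimately show ?thesis by blast
qed

end
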